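(* In the setting below, the minimum distance $d$ of $\mathrm{UB}(a,\ell)$ satisfies $$d\le\min\{\mathrm{wt}(a)^{\ell}+1,\ \mathrm{wt}(h)\}.$$
   Context: Setting. Let $n\ge 2$ and $\mathcal R_n=\mathbb F_2[x]/(x^n-1)$. Identifications and weights. Vectors in $\mathbb F_2^n$ are identified with elements of $\mathcal R_n$ via $c\mapsto\sum_ic_ix^i$. $\mathrm{wt}(g)$ is the number of nonzero coefficients of the degree-$<n$ representative of $g$. $\mathrm{Circ}(g)$ is the $n\times n$ binary matrix whose $i$-th row is the coefficient vector of $x^ig(x)$. Code data. Let $a(x)\in\mathbb F_2[x]$ with $a\mid x^n-1$ and $1\le r:=\deg a<n$. Let $\ell\ge1$, $t=2^\ell$, $b=a^t\in\mathcal R_n$, and $h=(x^n-1)/a\in\mathbb F_2[x]$. The univariate bicycle code $\mathrm{UB}(a,\ell)$ is the CSS code on $2n$ qubits with $H_X=[\mathrm{Circ}(a),\mathrm{Circ}(b)]$ and $H_Z=[\mathrm{Circ}(b)^{\mathsf T},\mathrm{Circ}(a)^{\mathsf T}]$. Distances. With $\ker(H)=\{c:Hc^{\mathsf T}=0\}$ and $\mathrm{rs}$ the row space, define $d_Z=\min\{\mathrm{wt}(v):v\in\ker(H_Z)\setminus\mathrm{rs}(H_X)\}$, define $d_X=\min\{\mathrm{wt}(v):v\in\ker(H_X)\setminus\mathrm{rs}(H_Z)\}$, and set $d=\min(d_X,d_Z)$. Here the weight of a vector in $\mathbb F_2^{2n}$ is its number of nonzero entries. *)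

theory Defs
  imports "HOL-Library.Z2" "HOL-Computational_Algebra.Polynomial"
begin

text \<open>F_2 is the type bit. Elements of R_n = F_2[x]/(x^n - 1) are represented by
  polynomials; the canonical representative is the remainder modulo x^n - 1.\<close>

definition xn1 :: "nat \<Rightarrow> bit poly" where
  "xn1 n = monom 1 n - 1"

definition rep :: "nat \<Rightarrow> bit poly \<Rightarrow> bit poly" where
  "rep n g = g mod xn1 n"

definition wt :: "nat \<Rightarrow> bit poly \<Rightarrow> nat" where
  "wt n g = card {i. i < n \<and> coeff (rep n g) i \<noteq> 0}"

definition Circ :: "nat \<Rightarrow> bit poly \<Rightarrow> nat \<Rightarrow> nat \<Rightarrow> bit" where
  "Circ n g i j = coeff (rep n (monom 1 i * g)) j"

text \<open>Binary matrices with m rows and N columns are functions nat => nat => bit used on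
  i < m, j < N; vectors of length N are functions nat => bit, considered on j < N.\<close>

definition HX :: "nat \<Rightarrow> bit poly \<Rightarrow> bit poly \<Rightarrow> nat \<Rightarrow> nat \<Rightarrow> bit" where
  "HX n a b i j = (if j < n then Circ n a i j else Circ n b i (j - n))"

definition HZ :: "nat \<Rightarrow> bit poly \<Rightarrow> bit poly \<Rightarrow> nat \<Rightarrow> nat \<Rightarrow> bit" where
  "HZ n a b i j = (if j < n then Circ n b j i else Circ n a (j - n) i)"

definition vecs :: "nat \<Rightarrow> (nat \<Rightarrow> bit) set" where
  "vecs N = {v. \<forall>j. N \<le> j \<longrightarrow> v j = 0}"

definition kern :: "nat \<Rightarrow> nat \<Rightarrow> (nat \<Rightarrow> nat \<Rightarrow> bit) \<Rightarrow> (nat \<Rightarrow> bit) set" where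
  "kern m N H = {v \<in> vecs N. \<forall>i<m. (\<Sum>j<N. H i j * v j) = 0}"

definition rowsp :: "nat \<Rightarrow> nat \<Rightarrow> (nat \<Rightarrow> nat \<Rightarrow> bit) \<Rightarrow> (nat \<Rightarrow> bit) set" where
  "rowsp m N H = {v \<in> vecs N. \<exists>c :: nat \<Rightarrow> bit. \<forall>j<N. v j = (\<Sum>i<m. c i * H i j)}"

definition hw :: "nat \<Rightarrow> (nat \<Rightarrow> bit) \<Rightarrow> nat" where
  "hw N v = card {j. j < N \<and> v j \<noteq> 0}"

definition UB_b :: "nat \<Rightarrow> bit poly \<Rightarrow> nat \<Rightarrow> bit poly" where
  "UB_b n a l = rep n (a ^ (2 ^ l))"

definition dZ :: "nat \<Rightarrow> bit poly \<Rightarrow> nat \<Rightarrow> nat" where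
  "dZ n a l = (let b = UB_b n a l in
     Inf (hw (2*n) ` (kern n (2*n) (HZ n a b) - rowsp n (2*n) (HX n a b))))"

definition dX :: "nat \<Rightarrow> bit poly \<Rightarrow> nat \<Rightarrow> nat" where
  "dX n a l = (let b = UB_b n a l in
     Inf (hw (2*n) ` (kern n (2*n) (HX n a b) - rowsp n (2*n) (HZ n a b))))"

definition UB_dist :: "nat \<Rightarrow> bit poly \<Rightarrow> nat \<Rightarrow> nat" where
  "UB_dist n a l = min (dX n a l) (dZ n a l)"

end

theory Submission
  imports Defs
begin

text \<open>It suffices to bound d_Z, using Z-logical operators written as pairs (u, w) over R_n: the
  vector (u | w) lies in ker H_Z iff u b + w a = 0, and in the row space of H_X iff
  (u, w) = (C a, C b) for some C. The pair (0, h) is such an operator because a h = 0, and it is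
  not a stabiliser: C a = 0 forces h | C, hence C b = 0 since a | b. The pair (1, a^(t-1)) is one
  because b = a a^(t-1), and it is not a stabiliser because the non-constant divisor a of
  x^n - 1 is not a unit in R_n. Finally a^(t-1) = a a^2 a^4 ... a^(2^(l-1)); over F_2 squaring
  is additive and sends monomials to monomials, so it does not increase the weight, while the
  weight is submultiplicative, which gives wt(a^(t-1)) \<le> wt(a)^l.\<close>

declare add_bit_eq_xor [simp del] mult_bit_eq_and [simp del]
  \<comment> \<open>Z2 rewrites + and * on bit to xor and and, which breaks sums over F_2.\<close>

lemma coeff_xn1: "coeff (xn1 n) k = (if k = n then 1 else 0) - (if k = 0 then 1 else 0)"
  by (simp add: xn1_def coeff_monom)

lemma degree_xn1: "n \<ge> 1 \<Longrightarrow> degree (xn1 n) = n"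
  by (rule antisym, rule degree_le, simp_all add: coeff_xn1 le_degree)

lemma xn1_nonzero: "n \<ge> 1 \<Longrightarrow> xn1 n \<noteq> 0"
  using degree_xn1 by fastforce

lemma coeff_rep_eq_0:
  assumes "n \<ge> 1" and "n \<le> k"
  shows "coeff (rep n g) k = 0"
proof (cases "rep n g = 0")
  case False
  then have "degree (rep n g) < n"
    using assms(1) unfolding rep_def by (metis degree_mod_less' degree_xn1 xn1_nonzero)
  then show ?thesis using assms(2) by (simp add: coeff_eq_0)
qed simp

lemma rep_idem [simp]: "rep n (rep n g) = rep n g"
  by (simp add: rep_def)

lemma rep_eq_self: "n \<ge> 1 \<Longrightarrow> degree g < n \<Longrightarrow> rep n g = g"
  unfolding rep_def by (rule mod_poly_less) (simp add: degree_xn1)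

lemma rep_0 [simp]: "rep n 0 = 0"
  by (simp add: rep_def)

lemma rep_add: "rep n (f + g) = rep n f + rep n g"
  by (simp add: rep_def poly_mod_add_left)

lemma rep_smult: "rep n (smult c f) = smult c (rep n f)"
  by (simp add: rep_def mod_smult_left)

lemma rep_sum: "rep n (\<Sum>i\<in>S. f i) = (\<Sum>i\<in>S. rep n (f i))"
  by (induction S rule: infinite_finite_induct) (auto simp: rep_add)

lemma rep_mult: "rep n (f * g) = rep n (rep n f * rep n g)"
  by (simp add: rep_def mod_mult_eq)

lemma rep_mult_right: "rep n (f * rep n g) = rep n (f * g)"
  by (simp add: rep_def mod_mult_right_eq)

lemma rep_eq_iff: "rep n f = rep n g \<longleftrightarrow> xn1 n dvd f - g"
  by (simp add: rep_def mod_eq_dvd_iff)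

lemma rep_eq_0_iff: "rep n f = 0 \<longleftrightarrow> xn1 n dvd f"
  by (simp add: rep_def dvd_eq_mod_eq_0)

lemma dvd_rep: "d dvd xn1 n \<Longrightarrow> d dvd g \<Longrightarrow> d dvd rep n g"
  unfolding rep_def by (rule dvd_mod)

lemma wt_rep [simp]: "wt n (rep n g) = wt n g"
  by (simp add: wt_def)

lemma xn1_dvd_monom_power_minus_1: "xn1 n dvd monom 1 n ^ q - 1"
proof (induction q)
  case (Suc q)
  have "(monom 1 n :: bit poly) ^ Suc q - 1 = monom 1 n * (monom 1 n ^ q - 1) + xn1 n"
    by (simp add: xn1_def algebra_simps)
  then show ?case using Suc by simp
qed simp

lemma rep_monom: "n \<ge> 1 \<Longrightarrow> rep n (monom 1 k) = monom 1 (k mod n)"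
proof -
  assume n: "n \<ge> 1"
  have "(monom 1 k :: bit poly) = monom 1 (k mod n) * monom 1 n ^ (k div n)"
    by (simp add: monom_power mult_monom mult.commute)
  then have "rep n (monom 1 k) = rep n (monom 1 (k mod n))"
    unfolding rep_eq_iff
    by (metis dvd_mult mult.right_neutral right_diff_distrib xn1_dvd_monom_power_minus_1)
  also have "\<dots> = monom 1 (k mod n)"
    using n by (intro rep_eq_self) (auto intro: le_less_trans[OF degree_monom_le])
  finally show ?thesis .
qed

definition supp :: "nat \<Rightarrow> bit poly \<Rightarrow> nat set" where
  "supp n g = {i. i < n \<and> coeff (rep n g) i \<noteq> 0}"

lemma wt_eq_card_supp: "wt n g = card (supp n g)"
  by (simp add: wt_def supp_def)

lemma finite_supp [simp]: "finite (supp n g)"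
  by (simp add: supp_def)

lemma sum_monom_coeff_eq_reduced:
  assumes "n \<ge> 1" and "rep n u = u"
  shows "(\<Sum>i<n. monom (coeff u i) i) = u"
proof (rule poly_eqI)
  fix k
  have "coeff (\<Sum>i<n. monom (coeff u i) i) k = (if k < n then coeff u k else 0)"
    by (simp add: coeff_sum coeff_monom)
  also have "\<dots> = coeff u k"
    using coeff_rep_eq_0[OF assms(1), of k u] assms(2) by auto
  finally show "coeff (\<Sum>i<n. monom (coeff u i) i) k = coeff u k" .
qed

lemma rep_eq_sum_monom_supp:
  assumes "n \<ge> 1"
  shows "rep n g = (\<Sum>i\<in>supp n g. monom 1 i)"
proof -
  have "rep n g = (\<Sum>i<n. monom (coeff (rep n g) i) i)"
    by (simp add: sum_monom_coeff_eq_reduced[OF assms])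
  also have "\<dots> = (\<Sum>i\<in>supp n g. monom (coeff (rep n g) i) i)"
    by (rule sum.mono_neutral_right) (auto simp: supp_def)
  also have "\<dots> = (\<Sum>i\<in>supp n g. monom 1 i)"
    by (rule sum.cong) (auto simp: supp_def)
  finally show ?thesis .
qed

lemma wt_sum_monom_le:
  assumes n: "n \<ge> 1" and "finite S"
  shows "wt n (\<Sum>i\<in>S. monom 1 (e i)) \<le> card S"
proof -
  have rep_sum_monom: "rep n (\<Sum>i\<in>S. monom 1 (e i)) = (\<Sum>i\<in>S. monom 1 (e i mod n))"
    by (simp add: rep_sum rep_monom[OF n])
  have "supp n (\<Sum>i\<in>S. monom 1 (e i)) \<subseteq> (\<lambda>i. e i mod n) ` S"
  proof
    fix j assume "j \<in> supp n (\<Sum>i\<in>S. monom 1 (e i))"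
    then have "(\<Sum>i\<in>S. coeff (monom 1 (e i mod n)) j) \<noteq> (0::bit)"
      by (simp add: supp_def rep_sum_monom coeff_sum)
    then obtain i where "i \<in> S" "coeff (monom (1::bit) (e i mod n)) j \<noteq> 0"
      by (meson sum.neutral)
    then show "j \<in> (\<lambda>i. e i mod n) ` S" by (auto simp: coeff_monom split: if_splits)
  qed
  then have "wt n (\<Sum>i\<in>S. monom 1 (e i)) \<le> card ((\<lambda>i. e i mod n) ` S)"
    unfolding wt_eq_card_supp using assms(2) by (intro card_mono) auto
  also have "\<dots> \<le> card S" using assms(2) by (rule card_image_le)
  finally show ?thesis .
qed

lemma wt_mult_le:
  assumes n: "n \<ge> 1"
  shows "wt n (f * g) \<le> wt n f * wt n g"
proof -
  have "rep n f * rep n g = (\<Sum>(i, j)\<in>supp n f \<times> supp n g. monom 1 (i + j))"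
    by (simp add: rep_eq_sum_monom_supp[OF n] sum_product sum.cartesian_product mult_monom)
  then have "wt n (f * g) = wt n (\<Sum>p\<in>supp n f \<times> supp n g. monom 1 (fst p + snd p))"
    by (metis (no_types, lifting) rep_mult wt_rep case_prod_beta sum.cong)
  also have "\<dots> \<le> card (supp n f \<times> supp n g)"
    by (rule wt_sum_monom_le[OF n]) simp
  also have "\<dots> = wt n f * wt n g" by (simp add: wt_eq_card_supp card_cartesian_product)
  finally show ?thesis .
qed

lemma bit_poly_two_eq_0 [simp]: "(2 :: bit poly) = 0"
  by (metis bit_2_eq_0 numeral_2_eq_2 of_nat_0 of_nat_poly of_nat_numeral pCons_0_0)

lemma bit_poly_add_self [simp]: "(p :: bit poly) + p = 0"
  by (simp flip: mult_2)

lemma bit_poly_square_add: "((p :: bit poly) + q) ^ 2 = p ^ 2 + q ^ 2"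
  by (simp add: power2_eq_square algebra_simps)

lemma bit_poly_square_sum: "(\<Sum>i\<in>S. f i :: bit poly) ^ 2 = (\<Sum>i\<in>S. f i ^ 2)"
  by (induction S rule: infinite_finite_induct) (auto simp: bit_poly_square_add)

lemma wt_square_le:
  assumes n: "n \<ge> 1"
  shows "wt n (f ^ 2) \<le> wt n f"
proof -
  have "wt n (f ^ 2) = wt n (rep n f ^ 2)"
    by (metis power2_eq_square rep_mult wt_rep)
  also have "rep n f ^ 2 = (\<Sum>i\<in>supp n f. monom 1 (2 * i))"
    by (simp add: rep_eq_sum_monom_supp[OF n] bit_poly_square_sum monom_power mult.commute)
  also have "wt n \<dots> \<le> card (supp n f)"
    by (rule wt_sum_monom_le[OF n]) simp
  also have "\<dots> = wt n f" by (simp add: wt_eq_card_supp)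
  finally show ?thesis .
qed

lemma wt_power_two_pow_le:
  assumes n: "n \<ge> 1"
  shows "wt n (f ^ 2 ^ k) \<le> wt n f"
proof (induction k)
  case (Suc k)
  have "f ^ 2 ^ Suc k = (f ^ 2 ^ k) ^ 2" by (simp add: power_mult[symmetric] mult.commute)
  then show ?case using wt_square_le[OF n, of "f ^ 2 ^ k"] Suc by simp
qed simp

lemma wt_one_le: "n \<ge> 1 \<Longrightarrow> wt n 1 \<le> 1"
  using wt_sum_monom_le[of n "{0}" id] by (simp add: one_pCons)

lemma wt_power_pred_two_pow_le:
  assumes n: "n \<ge> 1"
  shows "wt n (f ^ (2 ^ l - 1)) \<le> wt n f ^ l"
proof (induction l)
  case 0
  then show ?case using wt_one_le[OF n] by simp
next
  case (Suc l)
  have "(2::nat) ^ Suc l - 1 = (2 ^ l - 1) + 2 ^ l" by simp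
  then have "f ^ (2 ^ Suc l - 1) = f ^ (2 ^ l - 1) * f ^ 2 ^ l"
    by (metis power_add)
  then have "wt n (f ^ (2 ^ Suc l - 1)) \<le> wt n (f ^ (2 ^ l - 1)) * wt n (f ^ 2 ^ l)"
    using wt_mult_le[OF n] by simp
  also have "\<dots> \<le> wt n f ^ l * wt n f"
    using Suc wt_power_two_pow_le[OF n] by (intro mult_mono) auto
  finally show ?case by (simp add: mult.commute)
qed

lemma sum_mult_Circ:
  "(\<Sum>i<n. c i * Circ n g i j) = coeff (rep n ((\<Sum>i<n. monom (c i) i) * g)) j"
proof -
  have "c i * Circ n g i j = coeff (rep n (monom (c i) i * g)) j" for i
  proof -
    have "monom (c i) i * g = smult (c i) (monom 1 i * g)"
      by (metis mult_smult_left smult_monom mult.right_neutral)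
    then show ?thesis by (simp only: Circ_def rep_smult coeff_smult)
  qed
  then show ?thesis by (simp add: sum_distrib_right rep_sum coeff_sum)
qed

lemma reduced_poly_eqI:
  assumes "n \<ge> 1" and "rep n p = p" and "rep n q = q"
    and "\<And>j. j < n \<Longrightarrow> coeff p j = coeff q j"
  shows "p = q"
proof (rule poly_eqI)
  fix k show "coeff p k = coeff q k"
    using assms coeff_rep_eq_0[OF assms(1), of k p] coeff_rep_eq_0[OF assms(1), of k q]
    by (cases "k < n") auto
qed

lemma sum_lessThan_add: "(\<Sum>j<n + (m::nat). f j) = (\<Sum>j<n. f j) + (\<Sum>j<m. f (n + j))"
  by (induction m) (auto simp: add_ac)

definition pair_vec :: "nat \<Rightarrow> bit poly \<Rightarrow> bit poly \<Rightarrow> nat \<Rightarrow> bit" where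
  "pair_vec n u w j = (if j < n then coeff u j else if j < 2 * n then coeff w (j - n) else 0)"

lemma pair_vec_in_kern_HZ:
  assumes n: "n \<ge> 1" and u: "rep n u = u" and w: "rep n w = w"
    and "rep n (u * b + w * a) = 0"
  shows "pair_vec n u w \<in> kern n (2 * n) (HZ n a b)"
  unfolding kern_def
proof (intro CollectI conjI allI impI)
  show "pair_vec n u w \<in> vecs (2 * n)" by (simp add: vecs_def pair_vec_def)
  fix i assume "i < n"
  have left: "(\<Sum>j<n. HZ n a b i j * pair_vec n u w j) = (\<Sum>j<n. coeff u j * Circ n b j i)"
    by (rule sum.cong) (simp_all add: HZ_def pair_vec_def mult.commute)
  have right: "(\<Sum>j<n. HZ n a b i (n + j) * pair_vec n u w (n + j)) =
      (\<Sum>j<n. coeff w j * Circ n a j i)"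
    by (rule sum.cong) (simp_all add: HZ_def pair_vec_def mult.commute)
  have "(\<Sum>j<2 * n. HZ n a b i j * pair_vec n u w j) =
      coeff (rep n (u * b)) i + coeff (rep n (w * a)) i"
    unfolding mult_2 sum_lessThan_add left right sum_mult_Circ
      sum_monom_coeff_eq_reduced[OF n u] sum_monom_coeff_eq_reduced[OF n w] ..
  also have "\<dots> = 0" using assms(4) by (simp only: rep_add flip: coeff_add) simp
  finally show "(\<Sum>j<2 * n. HZ n a b i j * pair_vec n u w j) = 0" .
qed

lemma pair_vec_in_rowsp_HX_imp:
  assumes n: "n \<ge> 1" and u: "rep n u = u" and w: "rep n w = w"
    and "pair_vec n u w \<in> rowsp n (2 * n) (HX n a b)"
  shows "\<exists>C. rep n (C * a) = u \<and> rep n (C * b) = w"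
proof -
  from assms(4) obtain c where c: "\<And>j. j < 2 * n \<Longrightarrow> pair_vec n u w j = (\<Sum>i<n. c i * HX n a b i j)"
    unfolding rowsp_def by blast
  define C where "C = (\<Sum>i<n. monom (c i) i)"
  have "coeff (rep n (C * a)) j = coeff u j \<and> coeff (rep n (C * b)) j = coeff w j" if "j < n" for j
    using c[of j] c[of "n + j"] that by (simp add: pair_vec_def HX_def sum_mult_Circ C_def)
  then have "rep n (C * a) = u" and "rep n (C * b) = w"
    by (auto intro: reduced_poly_eqI[OF n] simp: u w)
  then show ?thesis by blast
qed

lemma hw_pair_vec:
  assumes "rep n u = u" and "rep n w = w"
  shows "hw (2 * n) (pair_vec n u w) = wt n u + wt n w"
proof -
  define U where "U = {j. j < n \<and> coeff u j \<noteq> 0}"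
  define W where "W = {j. j < n \<and> coeff w j \<noteq> 0}"
  have "{j. j < 2 * n \<and> pair_vec n u w j \<noteq> 0} = U \<union> (+) n ` W" (is "?S = _")
  proof
    show "?S \<subseteq> U \<union> (+) n ` W"
    proof
      fix j assume "j \<in> ?S"
      then show "j \<in> U \<union> (+) n ` W"
        by (cases "j < n") (auto simp: U_def W_def pair_vec_def intro!: image_eqI[of _ _ "j - n"])
    qed
  qed (auto simp: U_def W_def pair_vec_def)
  moreover have "U \<inter> (+) n ` W = {}" by (auto simp: U_def)
  ultimately have "hw (2 * n) (pair_vec n u w) = card U + card ((+) n ` W)"
    unfolding hw_def by (simp add: card_Un_disjoint U_def W_def)
  then show ?thesis
    by (simp add: card_image wt_def assms U_def W_def)
qed

lemma dZ_le_wt_pair: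
  assumes "n \<ge> 1" and "rep n u = u" and "rep n w = w"
    and "rep n (u * UB_b n a l + w * a) = 0"
    and "\<nexists>C. rep n (C * a) = u \<and> rep n (C * UB_b n a l) = w"
  shows "dZ n a l \<le> wt n u + wt n w"
proof -
  let ?b = "UB_b n a l"
  have "pair_vec n u w \<in> kern n (2 * n) (HZ n a ?b) - rowsp n (2 * n) (HX n a ?b)"
    using pair_vec_in_kern_HZ pair_vec_in_rowsp_HX_imp assms by blast
  then have "dZ n a l \<le> hw (2 * n) (pair_vec n u w)"
    unfolding dZ_def Let_def by (intro cINF_lower) auto
  then show ?thesis using hw_pair_vec assms(2,3) by simp
qed

lemma rep_mult_eq_0_if_dvd:
  assumes "a * h = xn1 n" and "a \<noteq> 0" and "a dvd b" and "rep n (C * a) = 0"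
  shows "rep n (C * b) = 0"
proof -
  have "a * h dvd a * C" using assms(1,4) by (simp add: rep_eq_0_iff mult.commute)
  then have "h dvd C" using assms(2) by simp
  then have "a * h dvd b * C" using assms(3) by (simp add: mult_dvd_mono)
  then show ?thesis by (simp add: rep_eq_0_iff assms(1) mult.commute)
qed

lemma rep_mult_neq_rep_1:
  assumes "a dvd xn1 n" and "degree a \<ge> 1"
  shows "rep n (C * a) \<noteq> rep n 1"
proof
  assume "rep n (C * a) = rep n 1"
  then have "a dvd C * a - 1" using assms(1) by (auto simp: rep_eq_iff intro: dvd_trans)
  with dvd_triv_right have "a dvd C * a - (C * a - 1)" by (rule dvd_diff)
  then have "is_unit a" by simp
  moreover have "a \<noteq> 0" using assms(2) by auto
  ultimately show False using assms(2) by (simp add: is_unit_iff_degree)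
qed

lemma dZ_le_wt_cofactor:
  assumes n: "n \<ge> 1" and ah: "a * h = xn1 n" and "degree a \<ge> 1"
  shows "dZ n a l \<le> wt n h"
proof -
  have "a \<noteq> 0" and "h \<noteq> 0" using assms xn1_nonzero[OF n] by auto
  then have "degree a + degree h = n" using ah degree_xn1[OF n] by (metis degree_mult_eq)
  then have h: "rep n h = h" using assms(3) by (intro rep_eq_self[OF n]) simp
  have "a dvd UB_b n a l" unfolding UB_b_def by (intro dvd_rep) (auto simp flip: ah)
  then have "\<nexists>C. rep n (C * a) = 0 \<and> rep n (C * UB_b n a l) = h"
    using rep_mult_eq_0_if_dvd[OF ah \<open>a \<noteq> 0\<close>] h \<open>h \<noteq> 0\<close> by metis
  moreover have "rep n (0 * UB_b n a l + h * a) = 0"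
    by (simp add: rep_eq_0_iff ah mult.commute)
  ultimately have "dZ n a l \<le> wt n 0 + wt n h" by (intro dZ_le_wt_pair[OF n]) (simp_all add: h)
  then show ?thesis by (simp add: wt_def)
qed

lemma dZ_le_wt_power:
  assumes n: "n \<ge> 1" and "a dvd xn1 n" and "degree a \<ge> 1"
  shows "dZ n a l \<le> wt n a ^ l + 1"
proof -
  define w where "w = rep n (a ^ (2 ^ l - 1))"
  have one: "rep n 1 = 1" using n by (intro rep_eq_self) auto
  have "a ^ 2 ^ l = a * a ^ (2 ^ l - 1)" by (simp flip: power_Suc)
  then have "rep n (w * a) = rep n (UB_b n a l)"
    by (simp add: w_def UB_b_def mult.commute rep_mult_right)
  then have "rep n (1 * UB_b n a l + w * a) = 0" by (simp add: rep_add)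
  moreover have "\<nexists>C. rep n (C * a) = 1 \<and> rep n (C * UB_b n a l) = w"
    using rep_mult_neq_rep_1[OF assms(2,3)] one by metis
  ultimately have "dZ n a l \<le> wt n 1 + wt n w" by (intro dZ_le_wt_pair[OF n]) (simp_all add: one w_def)
  also have "\<dots> \<le> 1 + wt n a ^ l"
    using wt_one_le[OF n] wt_power_pred_two_pow_le[OF n, of a l] unfolding w_def wt_rep
    by (rule add_mono)
  finally show ?thesis by simp
qed

theorem corollary2:
  fixes n l :: nat and a :: "bit poly"
  assumes "n \<ge> 2"
    and "a dvd xn1 n"
    and "1 \<le> degree a" and "degree a < n"
    and "l \<ge> 1"
  shows "UB_dist n a l \<le> min (wt n a ^ l + 1) (wt n (xn1 n div a))"
proof -
  have n: "n \<ge> 1" using assms(1) by simp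
  have cofactor: "a * (xn1 n div a) = xn1 n" using assms(2) by simp
  have "UB_dist n a l \<le> dZ n a l" by (simp add: UB_dist_def)
  also have "\<dots> \<le> min (wt n a ^ l + 1) (wt n (xn1 n div a))"
    using dZ_le_wt_power[OF n assms(2,3)] dZ_le_wt_cofactor[OF n cofactor assms(3)] by simp
  finally show ?thesis .
qed

end
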